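(* Let $q$ be a prime power, let $1 \le k \le n$ be integers, and let $S \subseteq \mathcal{L}_{n,k}$. If $\mu_k(S) = (1+z)^{-1}$ where $z \in \mathbb{R}_{\ge 0}$, then \[ \mu_{k-1}(\partial S) \ge \left(1+ \frac{q(q^{k-1}-1)(q^{n-k}-1)} {(q^k-1)(q^{n-k+1}-1)} \cdot z \right)^{-1} \ge \left(1+\frac{z}{q}\right)^{-1}. \]
   Context: $\mathbb{F}_q$ is the finite field with $q$ elements. $\mathcal{L}_{n,k}$ denotes the set of $k$-dimensional linear subspaces of $(\mathbb{F}_q)^n$. For $S \subseteq \mathcal{L}_{n,k}$, $\mu_k(S) = |S|/|\mathcal{L}_{n,k}|$. For $1 \le k \le n$ and $S \subseteq \mathcal{L}_{n,k}$, the shadow of $S$ is $\partial S = \{B \in \mathcal{L}_{n,k-1} : \exists A \in S,\ B \subset A\}$, and $\mu_{k-1}(\partial S) = |\partial S|/|\mathcal{L}_{n,k-1}|$. *)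

theory Defs
  imports "HOL-Analysis.Analysis"
begin

definition subspaces_of_dim :: "nat \<Rightarrow> ('a::{field,finite} ^ 'n) set set" where
  "subspaces_of_dim k = {V. vec.subspace V \<and> vec.dim V = k}"

definition mu :: "nat \<Rightarrow> ('a::{field,finite} ^ 'n) set set \<Rightarrow> real" where
  "mu k S = real (card S) / real (card (subspaces_of_dim k :: ('a ^ 'n) set set))"

definition shadow :: "nat \<Rightarrow> ('a::{field,finite} ^ 'n) set set \<Rightarrow> ('a ^ 'n) set set" where
  "shadow k S = {B \<in> subspaces_of_dim (k - 1). \<exists>A \<in> S. B \<subset> A}"

end

theory Submission
  imports Defs
begin

(* For a function f on the k-dimensional subspaces let (down f) C be the sum of f over the
   k-spaces containing the (k-1)-space C, and let up be the adjoint of down. Counting common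
   super- and subspaces of two j-spaces gives the commutation relation
     down_(j+1) up_(j+1) = up_j down_j + ([n-j]_q - [j]_q) id,
   and induction on j turns it into the spectral bound
   |down g|^2 <= q [k-1]_q [n-k]_q |g|^2 for every g of sum zero.
   For f the indicator of S, down f is supported on the shadow and sums to [k]_q |S|, so
   Cauchy-Schwarz together with the spectral bound for f minus its mean bounds |shadow S|
   from below; rearranging gives the first inequality. The second one is q [m]_q <= [m+1]_q,
   used twice. *)

section \<open>Counting subspaces\<close>

lemma card_field_gt_1: "real CARD('a::{field,finite}) > 1"
proof -
  have "card {0::'a, 1} \<le> CARD('a)" by (rule card_mono) auto
  then show ?thesis by simp
qed

lemma span_insert_eq_image:
  fixes x :: "'a::field^'n"
  shows "vec.span (insert x F) = (\<lambda>(c, y). c *s x + y) ` (UNIV \<times> vec.span F)"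
proof safe
  fix y assume "y \<in> vec.span (insert x F)"
  then obtain c where "y - c *s x \<in> vec.span F" using vec.span_insert by blast
  then show "y \<in> (\<lambda>(c, y). c *s x + y) ` (UNIV \<times> vec.span F)"
    by (intro image_eqI[of _ _ "(c, y - c *s x)"]) auto
next
  fix c y assume "y \<in> vec.span F"
  then have "y \<in> vec.span (insert x F)" using vec.span_mono by blast
  moreover have "c *s x \<in> vec.span (insert x F)" by (simp add: vec.span_base vec.span_scale)
  ultimately show "c *s x + y \<in> vec.span (insert x F)"
    by (simp add: vec.span_add)
qed

lemma inj_on_span_insert:
  fixes x :: "'a::field^'n"
  assumes "x \<notin> vec.span F"
  shows "inj_on (\<lambda>(c, y). c *s x + y) (UNIV \<times> vec.span F)"
proof (rule inj_onI, clarsimp)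
  fix c y c' y'
  assume y: "y \<in> vec.span F" "y' \<in> vec.span F" and eq: "c *s x + y = c' *s x + y'"
  show "c = c' \<and> y = y'"
  proof (cases "c = c'")
    case True
    then show ?thesis using eq by simp
  next
    case False
    have "(c - c') *s x = y' - y" using eq by (simp add: algebra_simps vector_sub_rdistrib)
    then have "x = inverse (c - c') *s (y' - y)"
      using False by (metis right_minus_eq vector_smult_assoc vector_smult_lid field_class.field_inverse)
    then have "x \<in> vec.span F" using y by (simp add: vec.span_diff vec.span_scale)
    with assms show ?thesis by simp
  qed
qed

lemma card_span_independent:
  fixes B :: "('a::{field,finite}^'n) set"
  assumes "vec.independent B"
  shows "card (vec.span B) = CARD('a) ^ card B"
  using finite_class.finite[of B] assms
proof (induction B rule: finite_induct)
  case empty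
  then show ?case by simp
next
  case (insert x F)
  then have "vec.independent F" "x \<notin> vec.span F" by (simp_all add: vec.independent_insert)
  then show ?case
    using insert inj_on_span_insert[of x F]
    by (simp add: span_insert_eq_image card_image card_cartesian_product)
qed

lemma card_subspace:
  fixes W :: "('a::{field,finite}^'n) set"
  assumes "vec.subspace W"
  shows "card W = CARD('a) ^ vec.dim W"
proof -
  obtain B where "B \<subseteq> W" "vec.independent B" "W \<subseteq> vec.span B" "card B = vec.dim W"
    using vec.basis_exists by blast
  moreover have "vec.span B = W" using calculation assms vec.span_subspace by blast
  ultimately show ?thesis using card_span_independent by metis
qed

lemma subspaces_of_dim_iff: "A \<in> subspaces_of_dim j \<longleftrightarrow> vec.subspace A \<and> vec.dim A = j"
  by (simp add: subspaces_of_dim_def)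

lemma card_Diff_subspace:
  fixes A B :: "('a::{field,finite}^'n) set"
  assumes "vec.subspace A" "vec.subspace B" "B \<subseteq> A"
  shows "real (card (A - B)) = real CARD('a) ^ vec.dim A - real CARD('a) ^ vec.dim B"
proof -
  have "card B \<le> card A" using assms(3) by (simp add: card_mono)
  then have "real (card (A - B)) = real (card A) - real (card B)"
    using assms(3) by (simp add: card_Diff_subset of_nat_diff)
  then show ?thesis using assms(1,2) by (simp add: card_subspace)
qed

definition qint :: "real \<Rightarrow> nat \<Rightarrow> real" where
  "qint q m = (q ^ m - 1) / (q - 1)"

lemma qint_Suc: "q \<noteq> 1 \<Longrightarrow> qint q (Suc m) = 1 + q * qint q m"
  by (simp add: qint_def field_simps)

lemma qint_pos: "q > 1 \<Longrightarrow> m > 0 \<Longrightarrow> qint q m > 0"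
  by (simp add: qint_def one_less_power)

lemma qint_nonneg: "q > 1 \<Longrightarrow> qint q m \<ge> 0"
  by (simp add: qint_def one_le_power)

definition indep_lists :: "('a::{field,finite}^'n) set \<Rightarrow> nat \<Rightarrow> ('a^'n) list set" where
  "indep_lists W r =
     {xs. length xs = r \<and> distinct xs \<and> vec.independent (set xs) \<and> set xs \<subseteq> W}"

definition num_indep_lists :: "real \<Rightarrow> nat \<Rightarrow> nat \<Rightarrow> real" where
  "num_indep_lists q m r = (\<Prod>i<r. q ^ m - q ^ i)"

lemma finite_indep_lists: "finite (indep_lists W r)"
proof -
  have "finite {xs::('a::{field,finite}^'n) list. set xs \<subseteq> UNIV \<and> length xs = r}"
    by (rule finite_lists_length_eq) simp
  then show ?thesis by (rule finite_subset[rotated]) (auto simp: indep_lists_def)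
qed

lemma span_indep_lists:
  assumes "vec.subspace W" "xs \<in> indep_lists W r"
  shows "vec.span (set xs) \<in> subspaces_of_dim r" "vec.span (set xs) \<subseteq> W"
  using assms distinct_card[of xs] vec.span_minimal[of "set xs" W]
  by (auto simp: indep_lists_def subspaces_of_dim_iff vec.dim_eq_card_independent)

lemma indep_lists_Suc:
  "indep_lists W (Suc r)
     = (\<lambda>(xs, v). v # xs) ` (SIGMA xs:indep_lists W r. W - vec.span (set xs))"
proof safe
  fix ys assume ys: "ys \<in> indep_lists W (Suc r)"
  then obtain v xs where ys_eq: "ys = v # xs" unfolding indep_lists_def by (cases ys) auto
  with ys have "v \<notin> set xs" "vec.independent (insert v (set xs))"
    unfolding indep_lists_def by auto
  then have "vec.independent (set xs)" "v \<notin> vec.span (set xs)"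
    by (simp_all add: vec.independent_insert)
  with ys show "ys \<in> (\<lambda>(xs, v). v # xs) ` (SIGMA xs:indep_lists W r. W - vec.span (set xs))"
    unfolding indep_lists_def ys_eq by (intro image_eqI[of _ _ "(xs, v)"]) auto
next
  fix xs v assume "xs \<in> indep_lists W r" "v \<in> W" "v \<notin> vec.span (set xs)"
  moreover have "v \<notin> set xs" using calculation vec.span_superset by blast
  ultimately show "v # xs \<in> indep_lists W (Suc r)"
    unfolding indep_lists_def by (auto simp: vec.independent_insert)
qed

lemma card_indep_lists:
  fixes W :: "('a::{field,finite}^'n) set"
  assumes W: "vec.subspace W" and r: "r \<le> vec.dim W"
  shows "real (card (indep_lists W r)) = num_indep_lists (real CARD('a)) (vec.dim W) r"
  using r
proof (induction r)
  case 0
  have "indep_lists W 0 = {[]}" unfolding indep_lists_def by (auto simp: vec.independent_empty)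
  then show ?case by (simp add: num_indep_lists_def)
next
  case (Suc r)
  let ?q = "real CARD('a)"
  have extensions: "real (card (W - vec.span (set xs))) = ?q ^ vec.dim W - ?q ^ r"
    if "xs \<in> indep_lists W r" for xs
    using card_Diff_subspace[OF W vec.subspace_span] span_indep_lists[OF W that]
    by (simp add: subspaces_of_dim_iff)
  have "inj_on (\<lambda>(xs, v). v # xs) (SIGMA xs:indep_lists W r. W - vec.span (set xs))"
    by (auto simp: inj_on_def)
  then have "card (indep_lists W (Suc r))
      = (\<Sum>xs\<in>indep_lists W r. card (W - vec.span (set xs)))"
    unfolding indep_lists_Suc by (simp add: card_image card_SigmaI finite_indep_lists)
  then have "real (card (indep_lists W (Suc r)))
      = real (card (indep_lists W r)) * (?q ^ vec.dim W - ?q ^ r)"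
    by (simp add: extensions of_nat_sum)
  then show ?case using Suc by (simp add: num_indep_lists_def)
qed

text \<open>Each r-dimensional subspace of W carries the same number of independent r-lists
  spanning it, so counting all independent r-lists of W counts its r-subspaces.\<close>
lemma card_subspaces_of_dim_in:
  fixes W :: "('a::{field,finite}^'n) set"
  assumes W: "vec.subspace W" and r: "r \<le> vec.dim W"
  shows "real (card {C \<in> subspaces_of_dim r. C \<subseteq> W}) * num_indep_lists (real CARD('a)) r r
         = num_indep_lists (real CARD('a)) (vec.dim W) r"
proof -
  let ?X = "{C \<in> subspaces_of_dim r. C \<subseteq> W}"
  have spanning: "vec.span (set xs) = C" if "C \<in> ?X" "xs \<in> indep_lists C r" for C xs
  proof -
    have "vec.span (set xs) \<in> subspaces_of_dim r" "vec.span (set xs) \<subseteq> C"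
      using span_indep_lists[of C xs r] that by (auto simp: subspaces_of_dim_iff)
    then show ?thesis
      using that vec.subspace_dim_equal[of "vec.span (set xs)" C] by (auto simp: subspaces_of_dim_iff)
  qed
  have "indep_lists W r = (\<Union>C\<in>?X. indep_lists C r)"
  proof
    show "indep_lists W r \<subseteq> (\<Union>C\<in>?X. indep_lists C r)"
    proof
      fix xs assume xs: "xs \<in> indep_lists W r"
      then have "xs \<in> indep_lists (vec.span (set xs)) r"
        using vec.span_superset unfolding indep_lists_def by auto
      with span_indep_lists[OF W xs] show "xs \<in> (\<Union>C\<in>?X. indep_lists C r)" by blast
    qed
  qed (auto simp: indep_lists_def)
  moreover have "indep_lists C r \<inter> indep_lists C' r = {}" if "C \<in> ?X" "C' \<in> ?X" "C \<noteq> C'" for C C'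
    using spanning that by blast
  ultimately have "card (indep_lists W r) = (\<Sum>C\<in>?X. card (indep_lists C r))"
    by (simp add: card_UN_disjoint finite_indep_lists)
  then have "real (card (indep_lists W r)) = (\<Sum>C\<in>?X. num_indep_lists (real CARD('a)) r r)"
    by (simp add: card_indep_lists subspaces_of_dim_iff)
  then show ?thesis using card_indep_lists[OF W r] by simp
qed

lemma num_indep_lists_Suc_Suc:
  "num_indep_lists q (Suc m) (Suc r) = (q ^ Suc m - 1) * q ^ r * num_indep_lists q m r"
proof -
  have "num_indep_lists q (Suc m) (Suc r) = (q ^ Suc m - 1) * (\<Prod>i<r. q * (q ^ m - q ^ i))"
    unfolding num_indep_lists_def prod.lessThan_Suc_shift by (simp add: algebra_simps)
  then show ?thesis by (simp add: prod.distrib num_indep_lists_def)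
qed

lemma num_indep_lists_pos: "q > 1 \<Longrightarrow> num_indep_lists q r r > 0"
  unfolding num_indep_lists_def by (intro prod_pos) (auto intro: power_strict_increasing)

lemma num_indep_lists_codim_1:
  assumes "q \<noteq> 1"
  shows "num_indep_lists q (Suc r) r = qint q (Suc r) * num_indep_lists q r r"
proof (induction r)
  case 0
  then show ?case using assms by (simp add: num_indep_lists_def qint_def)
next
  case (Suc r)
  have "(q ^ Suc (Suc r) - 1) * qint q (Suc r) = qint q (Suc (Suc r)) * (q ^ Suc r - 1)"
    using assms unfolding qint_def by simp
  with Suc show ?case by (simp add: num_indep_lists_Suc_Suc)
qed

lemma card_hyperplanes:
  fixes A :: "('a::{field,finite}^'n) set"
  assumes A: "A \<in> subspaces_of_dim j" and j: "j \<ge> 1"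
  shows "real (card {C \<in> subspaces_of_dim (j - 1). C \<subseteq> A}) = qint (real CARD('a)) j"
proof -
  let ?q = "real CARD('a)"
  obtain r where r: "j = Suc r" using j by (cases j) auto
  have q: "?q > 1" by (rule card_field_gt_1)
  have "real (card {C \<in> subspaces_of_dim r. C \<subseteq> A}) * num_indep_lists ?q r r
      = qint ?q (Suc r) * num_indep_lists ?q r r"
    using card_subspaces_of_dim_in[of A r] A q num_indep_lists_codim_1[of ?q r] r
    by (simp add: subspaces_of_dim_iff)
  then show ?thesis using num_indep_lists_pos[OF q, of r] r by simp
qed

text \<open>The (j+1)-spaces through B partition the complement of B.\<close>
lemma card_Compl_subspace:
  fixes B :: "('a::{field,finite}^'n) set"
  assumes B: "B \<in> subspaces_of_dim j"
  shows "card (UNIV - B) = (\<Sum>A\<in>{A \<in> subspaces_of_dim (Suc j). B \<subseteq> A}. card (A - B))"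
proof -
  let ?X = "{A \<in> subspaces_of_dim (Suc j). B \<subseteq> A}"
  have sB: "vec.subspace B" "vec.dim B = j" using B by (auto simp: subspaces_of_dim_iff)
  have span_B: "vec.span B = B" using sB by simp
  have unique: "A = vec.span (insert v B)" if "A \<in> ?X" "v \<in> A" "v \<notin> B" for A v
  proof -
    have "vec.span (insert v B) \<subseteq> A"
      using that vec.span_minimal[of "insert v B" A] by (auto simp: subspaces_of_dim_iff)
    moreover have "vec.dim (vec.span (insert v B)) = Suc j"
      using that sB by (simp add: vec.dim_insert span_B)
    ultimately show ?thesis
      using that vec.subspace_dim_equal[of "vec.span (insert v B)" A]
      by (auto simp: subspaces_of_dim_iff)
  qed
  have "vec.span (insert v B) \<in> ?X" "v \<in> vec.span (insert v B)" if "v \<notin> B" for v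
    using that sB vec.span_superset[of "insert v B"]
    by (auto simp: subspaces_of_dim_iff vec.dim_insert span_B)
  then have partition: "UNIV - B = (\<Union>A\<in>?X. A - B)" by blast
  show ?thesis
    unfolding partition
  proof (rule card_UN_disjoint)
    show "\<forall>A\<in>?X. \<forall>A'\<in>?X. A \<noteq> A' \<longrightarrow> (A - B) \<inter> (A' - B) = {}"
      using unique by blast
  qed simp_all
qed

lemma card_superspaces:
  fixes B :: "('a::{field,finite}^'n) set"
  assumes B: "B \<in> subspaces_of_dim j"
  shows "real (card {A \<in> subspaces_of_dim (Suc j). B \<subseteq> A}) = qint (real CARD('a)) (CARD('n) - j)"
proof -
  let ?q = "real CARD('a)" and ?X = "{A \<in> subspaces_of_dim (Suc j). B \<subseteq> A}"
  have sB: "vec.subspace B" "vec.dim B = j" using B by (auto simp: subspaces_of_dim_iff)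
  have q: "?q > 1" by (rule card_field_gt_1)
  have "real (card (A - B)) = ?q ^ Suc j - ?q ^ j" if "A \<in> ?X" for A
    using that sB card_Diff_subspace[of A B] by (simp add: subspaces_of_dim_iff)
  moreover have "real (card (UNIV - B)) = ?q ^ CARD('n) - ?q ^ j"
    using sB card_Diff_subspace[of UNIV B] by (simp add: card_cart_basis)
  ultimately have "?q ^ CARD('n) - ?q ^ j = real (card ?X) * (?q ^ Suc j - ?q ^ j)"
    using card_Compl_subspace[OF B] by (simp add: of_nat_sum)
  moreover have "?q ^ CARD('n) = ?q ^ j * ?q ^ (CARD('n) - j)"
    using sB dim_subset_UNIV_cart_gen[of B] by (simp flip: power_add)
  ultimately have "?q ^ j * (real (card ?X) * (?q - 1)) = ?q ^ j * (?q ^ (CARD('n) - j) - 1)"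
    by (simp add: algebra_simps)
  then have "real (card ?X) * (?q - 1) = ?q ^ (CARD('n) - j) - 1"
    using q by simp
  then show ?thesis using q by (simp add: qint_def field_simps)
qed

lemma subspaces_of_dim_above:
  fixes W :: "('a::{field,finite}^'n) set"
  assumes "vec.subspace W" "d \<le> vec.dim W"
  shows "{A \<in> subspaces_of_dim d. W \<subseteq> A} = (if vec.dim W = d then {W} else {})"
proof -
  have "A = W \<and> vec.dim W = d" if "A \<in> subspaces_of_dim d" "W \<subseteq> A" for A
    using that assms vec.dim_subset[OF \<open>W \<subseteq> A\<close>] vec.subspace_dim_equal[of W A]
    by (auto simp: subspaces_of_dim_iff)
  then show ?thesis using assms by (auto simp: subspaces_of_dim_iff)
qed

lemma subspaces_of_dim_below:
  fixes W :: "('a::{field,finite}^'n) set"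
  assumes "vec.subspace W" "vec.dim W \<le> d"
  shows "{C \<in> subspaces_of_dim d. C \<subseteq> W} = (if vec.dim W = d then {W} else {})"
proof -
  have "C = W \<and> vec.dim W = d" if "C \<in> subspaces_of_dim d" "C \<subseteq> W" for C
    using that assms vec.dim_subset[OF \<open>C \<subseteq> W\<close>] vec.subspace_dim_equal[of C W]
    by (auto simp: subspaces_of_dim_iff)
  then show ?thesis using assms by (auto simp: subspaces_of_dim_iff)
qed

lemma dim_Int_less:
  fixes B B' :: "('a::{field,finite}^'n) set"
  assumes "B \<in> subspaces_of_dim j" "B' \<in> subspaces_of_dim j" "B \<noteq> B'"
  shows "vec.dim (B \<inter> B') < j"
proof -
  have sB: "vec.subspace B" "vec.dim B = j" and sB': "vec.subspace B'" "vec.dim B' = j"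
    using assms by (auto simp: subspaces_of_dim_iff)
  have sI: "vec.subspace (B \<inter> B')" using sB sB' by (simp add: vec.subspace_inter)
  have "vec.dim (B \<inter> B') \<noteq> j"
  proof
    assume "vec.dim (B \<inter> B') = j"
    then have "B \<inter> B' = B" "B \<inter> B' = B'"
      using vec.subspace_dim_equal[OF sI sB(1)] vec.subspace_dim_equal[OF sI sB'(1)] sB sB' by auto
    with \<open>B \<noteq> B'\<close> show False by simp
  qed
  moreover have "vec.dim (B \<inter> B') \<le> j" using vec.dim_subset[of "B \<inter> B'" B] sB by auto
  ultimately show ?thesis by simp
qed

lemma sums_subset_iff:
  fixes A B B' :: "('a::{field,finite}^'n) set"
  assumes "vec.subspace A" "vec.subspace B" "vec.subspace B'"
  shows "{x + y |x y. x \<in> B \<and> y \<in> B'} \<subseteq> A \<longleftrightarrow> B \<subseteq> A \<and> B' \<subseteq> A"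
proof -
  have "B \<subseteq> {x + y |x y. x \<in> B \<and> y \<in> B'}" "B' \<subseteq> {x + y |x y. x \<in> B \<and> y \<in> B'}"
    using vec.subspace_0[OF assms(2)] vec.subspace_0[OF assms(3)] by force+
  then show ?thesis using assms(1) by (auto intro: vec.subspace_add)
qed

text \<open>Both sides are 1 if dim (B \<inter> B') = j - 1 and 0 otherwise.\<close>
lemma card_common_superspaces_eq_card_common_subspaces:
  fixes B B' :: "('a::{field,finite}^'n) set"
  assumes B: "B \<in> subspaces_of_dim j" and B': "B' \<in> subspaces_of_dim j"
    and "B \<noteq> B'" and j: "j \<ge> 1"
  shows "card {A \<in> subspaces_of_dim (Suc j). B \<subseteq> A \<and> B' \<subseteq> A}
       = card {C \<in> subspaces_of_dim (j - 1). C \<subseteq> B \<and> C \<subseteq> B'}"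
proof -
  let ?S = "{x + y |x y. x \<in> B \<and> y \<in> B'}" and ?I = "B \<inter> B'"
  have sB: "vec.subspace B" "vec.dim B = j" and sB': "vec.subspace B'" "vec.dim B' = j"
    using B B' by (auto simp: subspaces_of_dim_iff)
  have sS: "vec.subspace ?S" and sI: "vec.subspace ?I"
    using sB sB' by (simp_all add: vec.subspace_sums vec.subspace_inter)
  have dim_I: "vec.dim ?I \<le> j - 1"
    using dim_Int_less[OF B B' \<open>B \<noteq> B'\<close>] by simp
  moreover have "vec.dim ?S + vec.dim ?I = j + j"
    using vec.dim_sums_Int[OF sB(1) sB'(1)] sB sB' by simp
  ultimately have dim_S: "Suc j \<le> vec.dim ?S" and "vec.dim ?S = Suc j \<longleftrightarrow> vec.dim ?I = j - 1"
    using j by auto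
  have "{A \<in> subspaces_of_dim (Suc j). B \<subseteq> A \<and> B' \<subseteq> A}
      = {A \<in> subspaces_of_dim (Suc j). ?S \<subseteq> A}"
    using sums_subset_iff[OF _ sB(1) sB'(1)] unfolding subspaces_of_dim_iff by blast
  also have "\<dots> = (if vec.dim ?I = j - 1 then {?S} else {})"
    using subspaces_of_dim_above[OF sS dim_S] \<open>vec.dim ?S = Suc j \<longleftrightarrow> _\<close> by simp
  moreover have "{C \<in> subspaces_of_dim (j - 1). C \<subseteq> B \<and> C \<subseteq> B'}
      = (if vec.dim ?I = j - 1 then {?I} else {})"
    using subspaces_of_dim_below[OF sI dim_I] by simp
  ultimately show ?thesis by simp
qed

section \<open>The down and up operators\<close>

text \<open>Real functions on the j-dimensional subspaces are represented by functions on all sets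
  of vectors, of which only the values on subspaces_of_dim j matter.\<close>
definition down :: "nat \<Rightarrow> (('a::{field,finite}^'n) set \<Rightarrow> real) \<Rightarrow> ('a^'n) set \<Rightarrow> real" where
  "down j f C = (\<Sum>A\<in>subspaces_of_dim j. if C \<subseteq> A then f A else 0)"

definition up :: "nat \<Rightarrow> (('a::{field,finite}^'n) set \<Rightarrow> real) \<Rightarrow> ('a^'n) set \<Rightarrow> real" where
  "up j g A = (\<Sum>C\<in>subspaces_of_dim (j - 1). if C \<subseteq> A then g C else 0)"

definition dot :: "nat \<Rightarrow> (('a::{field,finite}^'n) set \<Rightarrow> real) \<Rightarrow> (('a^'n) set \<Rightarrow> real) \<Rightarrow> real" where
  "dot j f g = (\<Sum>A\<in>subspaces_of_dim j. f A * g A)"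

lemma dot_commute: "dot j f g = dot j g f"
  unfolding dot_def by (simp add: mult.commute)

lemma dot_self_nonneg: "dot j f f \<ge> 0"
  unfolding dot_def by (intro sum_nonneg) simp

lemma dot_down_eq_dot_up: "dot (j - 1) (down j f) g = dot j f (up j g)"
proof -
  have "dot (j - 1) (down j f) g
      = (\<Sum>C\<in>subspaces_of_dim (j - 1). \<Sum>A\<in>subspaces_of_dim j. if C \<subseteq> A then f A * g C else 0)"
    unfolding dot_def down_def sum_distrib_right by (intro sum.cong refl) auto
  also have "\<dots> = (\<Sum>A\<in>subspaces_of_dim j. \<Sum>C\<in>subspaces_of_dim (j - 1). if C \<subseteq> A then f A * g C else 0)"
    by (rule sum.swap)
  also have "\<dots> = dot j f (up j g)"
    unfolding dot_def up_def sum_distrib_left by (intro sum.cong refl) auto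
  finally show ?thesis .
qed

lemma sum_if_sum_if_eq_sum_card:
  assumes "finite X"
  shows "(\<Sum>x\<in>X. if P x then (\<Sum>y\<in>Y. if Q x y then h y else 0) else (0::real))
       = (\<Sum>y\<in>Y. h y * real (card {x\<in>X. P x \<and> Q x y}))"
proof -
  have "(\<Sum>x\<in>X. if P x then (\<Sum>y\<in>Y. if Q x y then h y else 0) else (0::real))
      = (\<Sum>y\<in>Y. \<Sum>x\<in>X. if P x \<and> Q x y then h y else 0)"
    by (subst sum.swap) (auto intro: sum.cong)
  also have "\<dots> = (\<Sum>y\<in>Y. h y * real (card {x\<in>X. P x \<and> Q x y}))"
    using assms by (simp add: sum.If_cases Int_def conj_commute mult.commute)
  finally show ?thesis .
qed

lemma down_up_eq_up_down:
  fixes B :: "('a::{field,finite}^'n) set" and h :: "('a^'n) set \<Rightarrow> real"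
  assumes B: "B \<in> subspaces_of_dim j" and j: "j \<ge> 1"
  shows "down (Suc j) (up (Suc j) h) B
       = up j (down j h) B
         + (qint (real CARD('a)) (CARD('n) - j) - qint (real CARD('a)) j) * h B"
proof -
  let ?L = "subspaces_of_dim j :: ('a^'n) set set"
  let ?above = "\<lambda>B'. real (card {A \<in> subspaces_of_dim (Suc j). B \<subseteq> A \<and> B' \<subseteq> A})"
  let ?below = "\<lambda>B'. real (card {C \<in> subspaces_of_dim (j - 1). C \<subseteq> B \<and> C \<subseteq> B'})"
  have "down (Suc j) (up (Suc j) h) B - up j (down j h) B
      = (\<Sum>B'\<in>?L. h B' * (?above B' - ?below B'))"
    unfolding down_def up_def diff_Suc_1 sum_if_sum_if_eq_sum_card[OF finite]
    by (simp add: sum_subtractf algebra_simps)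
  also have "\<dots> = h B * (?above B - ?below B)
      + (\<Sum>B'\<in>?L - {B}. h B' * (?above B' - ?below B'))"
    using B by (simp add: sum.remove)
  also have "(\<Sum>B'\<in>?L - {B}. h B' * (?above B' - ?below B')) = 0"
    by (rule sum.neutral) (use card_common_superspaces_eq_card_common_subspaces[OF B _ _ j] in auto)
  also have "?above B - ?below B = qint (real CARD('a)) (CARD('n) - j) - qint (real CARD('a)) j"
    using card_superspaces[OF B] card_hyperplanes[OF B j] by simp
  finally show ?thesis by (simp add: algebra_simps)
qed

lemma up_one:
  fixes A :: "('a::{field,finite}^'n) set"
  assumes "A \<in> subspaces_of_dim j" "j \<ge> 1"
  shows "up j (\<lambda>_. 1) A = qint (real CARD('a)) j"
  using card_hyperplanes[OF assms] by (simp add: up_def sum.If_cases Int_def conj_commute)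

lemma down_one:
  fixes C :: "('a::{field,finite}^'n) set"
  assumes "C \<in> subspaces_of_dim (j - 1)" "j \<ge> 1"
  shows "down j (\<lambda>_. 1) C = qint (real CARD('a)) (CARD('n) - (j - 1))"
  using card_superspaces[OF assms(1)] assms(2)
  by (simp add: down_def sum.If_cases Int_def conj_commute)

lemma sum_down:
  fixes g :: "('a::{field,finite}^'n) set \<Rightarrow> real"
  assumes "j \<ge> 1"
  shows "(\<Sum>C\<in>subspaces_of_dim (j - 1). down j g C)
       = qint (real CARD('a)) j * (\<Sum>A\<in>subspaces_of_dim j. g A)"
proof -
  have "(\<Sum>C\<in>subspaces_of_dim (j - 1). down j g C) = dot (j - 1) (down j g) (\<lambda>_. 1)"
    by (simp add: dot_def)
  also have "\<dots> = dot j g (up j (\<lambda>_. 1))" by (rule dot_down_eq_dot_up)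
  also have "\<dots> = (\<Sum>A\<in>subspaces_of_dim j. g A * qint (real CARD('a)) j)"
    unfolding dot_def using up_one assms by (intro sum.cong) auto
  finally show ?thesis by (simp add: sum_distrib_right mult.commute)
qed

lemma card_subspaces_of_dim_ratio:
  assumes "j \<ge> 1"
  shows "real (card (subspaces_of_dim (j - 1) :: ('a::{field,finite}^'n) set set))
           * qint (real CARD('a)) (CARD('n) - (j - 1))
       = real (card (subspaces_of_dim j :: ('a^'n) set set)) * qint (real CARD('a)) j"
proof -
  let ?q = "real CARD('a)" and ?L' = "subspaces_of_dim (j - 1) :: ('a^'n) set set"
  have "(\<Sum>C\<in>?L'. down j (\<lambda>_. 1) C) = qint ?q j * real (card (subspaces_of_dim j :: ('a^'n) set set))"
    using sum_down[OF assms, of "\<lambda>_. 1"] by simp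
  moreover have "(\<Sum>C\<in>?L'. down j (\<lambda>_. 1) C) = (\<Sum>C\<in>?L'. qint ?q (CARD('n) - (j - 1)))"
    using down_one assms by (intro sum.cong) auto
  ultimately show ?thesis by (simp add: mult.commute)
qed

lemma dot_Cauchy_Schwarz: "(dot j f g)\<^sup>2 \<le> dot j f f * dot j g g"
  unfolding dot_def using Cauchy_Schwarz_ineq_sum[of f g] by (simp add: power2_eq_square)

lemma dot_up_up:
  fixes h :: "('a::{field,finite}^'n) set \<Rightarrow> real"
  assumes "j \<ge> 1"
  shows "dot (Suc j) (up (Suc j) h) (up (Suc j) h)
       = dot (j - 1) (down j h) (down j h)
         + (qint (real CARD('a)) (CARD('n) - j) - qint (real CARD('a)) j) * dot j h h"
proof -
  let ?c = "qint (real CARD('a)) (CARD('n) - j) - qint (real CARD('a)) j"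
  have "dot (Suc j) (up (Suc j) h) (up (Suc j) h) = dot j (down (Suc j) (up (Suc j) h)) h"
    using dot_down_eq_dot_up[of "Suc j" "up (Suc j) h" h] by simp
  also have "\<dots> = (\<Sum>B\<in>subspaces_of_dim j. (up j (down j h) B + ?c * h B) * h B)"
    unfolding dot_def by (intro sum.cong refl) (simp add: down_up_eq_up_down[OF _ assms])
  also have "\<dots> = dot j (up j (down j h)) h + ?c * dot j h h"
    unfolding dot_def by (simp add: distrib_right sum.distrib sum_distrib_left mult.assoc)
  also have "dot j (up j (down j h)) h = dot (j - 1) (down j h) (down j h)"
    by (metis dot_commute dot_down_eq_dot_up)
  finally show ?thesis .
qed

section \<open>The spectral bound\<close>

definition down_eigenvalue :: "real \<Rightarrow> nat \<Rightarrow> nat \<Rightarrow> real" where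
  "down_eigenvalue q n j = q * qint q (j - 1) * qint q (n - j)"

lemma down_eigenvalue_nonneg: "q > 1 \<Longrightarrow> down_eigenvalue q n j \<ge> 0"
  by (simp add: down_eigenvalue_def qint_nonneg)

lemma down_eigenvalue_Suc:
  assumes "q \<noteq> 1" "j \<ge> 1" "j < n"
  shows "down_eigenvalue q n (Suc j) = down_eigenvalue q n j + (qint q (n - j) - qint q j)"
proof -
  obtain s where s: "j = Suc s" using assms(2) by (cases j) auto
  have "n - j = Suc (n - Suc j)" using assms(3) by (simp add: Suc_diff_Suc)
  then show ?thesis
    using assms(1) by (simp add: down_eigenvalue_def qint_Suc s algebra_simps)
qed

lemma dot_up_up_le:
  fixes h :: "('a::{field,finite}^'n) set \<Rightarrow> real"
  assumes j: "j \<ge> 1" "j < CARD('n)"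
    and down_h: "dot (j - 1) (down j h) (down j h)
                   \<le> down_eigenvalue (real CARD('a)) CARD('n) j * dot j h h"
  shows "dot (Suc j) (up (Suc j) h) (up (Suc j) h)
       \<le> down_eigenvalue (real CARD('a)) CARD('n) (Suc j) * dot j h h"
proof -
  let ?ev = "down_eigenvalue (real CARD('a)) CARD('n)"
  let ?c = "qint (real CARD('a)) (CARD('n) - j) - qint (real CARD('a)) j"
  have "dot (Suc j) (up (Suc j) h) (up (Suc j) h) = dot (j - 1) (down j h) (down j h) + ?c * dot j h h"
    by (rule dot_up_up[OF j(1)])
  also have "\<dots> \<le> (?ev j + ?c) * dot j h h"
    using down_h by (simp add: algebra_simps)
  also have "?ev j + ?c = ?ev (Suc j)"
    using down_eigenvalue_Suc[OF _ j] card_field_gt_1[where 'a='a] by simp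
  finally show ?thesis .
qed

text \<open>Induction on j: for h = down (j+1) g, Cauchy-Schwarz gives
  |h|^2 = <g, up h> <= |g| |up h|, and |up h| is bounded by dot_up_up_le through the
  induction hypothesis for h, which again has sum zero.\<close>
lemma dot_down_le:
  fixes g :: "('a::{field,finite}^'n) set \<Rightarrow> real"
  assumes "j \<ge> 1" "j \<le> CARD('n)" "(\<Sum>A\<in>subspaces_of_dim j. g A) = 0"
  shows "dot (j - 1) (down j g) (down j g)
       \<le> down_eigenvalue (real CARD('a)) CARD('n) j * dot j g g"
  using assms
proof (induction j arbitrary: g rule: nat_induct_at_least)
  case base
  have "down 1 g C = 0" if "C \<in> subspaces_of_dim 0" for C
  proof -
    have "C \<subseteq> A" if "A \<in> subspaces_of_dim 1" for A
      using \<open>C \<in> subspaces_of_dim 0\<close> that vec.subspace_0 by (auto simp: subspaces_of_dim_iff)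
    then show ?thesis using base.prems by (simp add: down_def)
  qed
  then show ?case by (simp add: dot_def down_eigenvalue_def qint_def)
next
  case (Suc j)
  let ?ev = "down_eigenvalue (real CARD('a)) CARD('n) (Suc j)"
  define h where "h = down (Suc j) g"
  have "(\<Sum>B\<in>subspaces_of_dim j. h B) = 0"
    using sum_down[of "Suc j" g] Suc.prems by (simp add: h_def)
  then have up_bound: "dot (Suc j) (up (Suc j) h) (up (Suc j) h) \<le> ?ev * dot j h h"
    using Suc by (intro dot_up_up_le) simp_all
  have "(dot j h h)\<^sup>2 = (dot (Suc j) g (up (Suc j) h))\<^sup>2"
    using dot_down_eq_dot_up[of "Suc j" g h] by (simp add: h_def)
  also have "\<dots> \<le> dot (Suc j) g g * dot (Suc j) (up (Suc j) h) (up (Suc j) h)"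
    by (rule dot_Cauchy_Schwarz)
  also have "\<dots> \<le> dot (Suc j) g g * (?ev * dot j h h)"
    by (rule mult_left_mono[OF up_bound dot_self_nonneg])
  finally have "(dot j h h)\<^sup>2 \<le> dot (Suc j) g g * (?ev * dot j h h)" .
  then have "dot j h h \<le> ?ev * dot (Suc j) g g"
    using dot_self_nonneg[of j h] dot_self_nonneg[of "Suc j" g]
      down_eigenvalue_nonneg[OF card_field_gt_1[where 'a='a]]
    by (cases "dot j h h = 0") (auto simp: power2_eq_square algebra_simps mult_le_cancel_left_pos)
  then show ?case by (simp add: h_def)
qed

lemma sum_centered_eq_0:
  fixes f :: "('a::{field,finite}^'n) set \<Rightarrow> real" and k :: nat
  defines "N \<equiv> real (card (subspaces_of_dim k :: ('a^'n) set set))"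
    and "\<Sigma> \<equiv> (\<Sum>A\<in>subspaces_of_dim k. f A)"
  shows "(\<Sum>A\<in>subspaces_of_dim k. f A - \<Sigma> / N) = 0"
  by (cases "N = 0") (auto simp: sum_subtractf N_def \<Sigma>_def)

lemma dot_centered:
  fixes f :: "('a::{field,finite}^'n) set \<Rightarrow> real" and k :: nat
  defines "N \<equiv> real (card (subspaces_of_dim k :: ('a^'n) set set))"
    and "\<Sigma> \<equiv> (\<Sum>A\<in>subspaces_of_dim k. f A)"
  shows "dot k (\<lambda>A. f A - \<Sigma> / N) (\<lambda>A. f A - \<Sigma> / N) = dot k f f - \<Sigma>\<^sup>2 / N"
proof -
  have "dot k (\<lambda>A. f A - \<Sigma> / N) (\<lambda>A. f A - \<Sigma> / N)
      = (\<Sum>A\<in>subspaces_of_dim k. f A * f A - 2 * (\<Sigma> / N) * f A + (\<Sigma> / N) * (\<Sigma> / N))"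
    unfolding dot_def by (intro sum.cong refl) (simp add: algebra_simps)
  also have "\<dots> = dot k f f - 2 * (\<Sigma> / N) * \<Sigma> + N * (\<Sigma> / N) * (\<Sigma> / N)"
    unfolding dot_def sum.distrib sum_subtractf sum_distrib_left[symmetric] \<Sigma>_def[symmetric]
    by (simp add: N_def)
  also have "\<dots> = dot k f f - \<Sigma>\<^sup>2 / N"
    by (cases "N = 0") (simp_all add: power2_eq_square)
  finally show ?thesis .
qed

text \<open>Split f into its mean and a part g of sum zero; the mean contributes the trivial
  eigenvalue [k]_q [n-k+1]_q of up \<circ> down, and g is handled by dot_down_le.\<close>
lemma dot_down_self_le:
  fixes f :: "('a::{field,finite}^'n) set \<Rightarrow> real"
  assumes k: "k \<ge> 1" "k \<le> CARD('n)"
  defines "q \<equiv> real CARD('a)" and "N \<equiv> real (card (subspaces_of_dim k :: ('a^'n) set set))"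
    and "\<Sigma> \<equiv> (\<Sum>A\<in>subspaces_of_dim k. f A)"
  shows "dot (k - 1) (down k f) (down k f)
       \<le> down_eigenvalue q CARD('n) k * (dot k f f - \<Sigma>\<^sup>2 / N)
         + qint q k * qint q (CARD('n) - (k - 1)) * \<Sigma>\<^sup>2 / N"
proof -
  let ?L = "subspaces_of_dim k :: ('a^'n) set set" and ?L' = "subspaces_of_dim (k - 1) :: ('a^'n) set set"
  let ?a = "qint q k" and ?b = "qint q (CARD('n) - (k - 1))"
  define \<mu> where "\<mu> = \<Sigma> / N"
  define g where "g = (\<lambda>A. f A - \<mu>)"
  have sum_g: "(\<Sum>A\<in>?L. g A) = 0" and dot_g: "dot k g g = dot k f f - \<Sigma>\<^sup>2 / N"
    unfolding g_def \<mu>_def N_def \<Sigma>_def by (rule sum_centered_eq_0, rule dot_centered)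
  have down_f: "down k f C = down k g C + \<mu> * ?b" if "C \<in> ?L'" for C
  proof -
    have "down k f C = down k g C + \<mu> * down k (\<lambda>_. 1) C"
      unfolding down_def g_def sum_distrib_left sum.distrib[symmetric] by (intro sum.cong refl) auto
    then show ?thesis using down_one[OF that k(1)] by (simp add: q_def)
  qed
  have "dot (k - 1) (down k f) (down k f)
      = (\<Sum>C\<in>?L'. down k g C * down k g C + 2 * \<mu> * ?b * down k g C + \<mu>\<^sup>2 * ?b\<^sup>2)"
    unfolding dot_def using down_f by (intro sum.cong refl) (simp add: algebra_simps power2_eq_square)
  also have "\<dots> = dot (k - 1) (down k g) (down k g)
      + 2 * \<mu> * ?b * (\<Sum>C\<in>?L'. down k g C) + \<mu>\<^sup>2 * ?b\<^sup>2 * real (card ?L')"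
    by (simp add: dot_def sum.distrib sum_distrib_left)
  also have "(\<Sum>C\<in>?L'. down k g C) = 0"
    using sum_down[OF k(1), of g] sum_g by (simp add: q_def)
  also have "\<mu>\<^sup>2 * ?b\<^sup>2 * real (card ?L') = \<mu>\<^sup>2 * ?b * (real (card ?L') * ?b)"
    by (simp add: power2_eq_square mult_ac)
  also have "real (card ?L') * ?b = N * ?a"
    using card_subspaces_of_dim_ratio[OF k(1), where 'a='a and 'n='n] by (simp add: q_def N_def)
  also have "\<mu>\<^sup>2 * ?b * (N * ?a) = ?a * ?b * \<Sigma>\<^sup>2 / N"
    by (cases "N = 0") (simp_all add: \<mu>_def power2_eq_square field_simps)
  also have "dot (k - 1) (down k g) (down k g) \<le> down_eigenvalue q CARD('n) k * dot k g g"
    using dot_down_le[OF k sum_g] by (simp add: q_def)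
  finally show ?thesis by (simp add: dot_g)
qed

section \<open>Shadows\<close>

lemma down_indicator_outside_shadow:
  assumes "k \<ge> 1" "S \<subseteq> subspaces_of_dim k" "C \<in> subspaces_of_dim (k - 1)" "C \<notin> shadow k S"
  shows "down k (indicator S) C = 0"
proof -
  have "\<not> C \<subseteq> A" if "A \<in> S" for A
  proof
    assume "C \<subseteq> A"
    moreover have "C \<noteq> A" using assms that by (auto simp: subspaces_of_dim_iff)
    ultimately show False using assms that by (auto simp: shadow_def)
  qed
  then show ?thesis unfolding down_def by (intro sum.neutral) (auto simp: indicator_def)
qed

lemma sum_down_indicator_sq_le:
  assumes "k \<ge> 1" "S \<subseteq> subspaces_of_dim k"
  shows "(\<Sum>C\<in>subspaces_of_dim (k - 1). down k (indicator S) C)\<^sup>2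
       \<le> real (card (shadow k S)) * dot (k - 1) (down k (indicator S)) (down k (indicator S))"
proof -
  let ?L' = "subspaces_of_dim (k - 1)" and ?d = "down k (indicator S)"
  have shadow_sub: "shadow k S \<subseteq> ?L'" by (auto simp: shadow_def)
  have "(\<Sum>C\<in>?L'. ?d C) = (\<Sum>C\<in>shadow k S. 1 * ?d C)"
    using down_indicator_outside_shadow[OF assms] shadow_sub
    by (simp add: sum.mono_neutral_right)
  also have "\<dots>\<^sup>2 \<le> (\<Sum>C\<in>shadow k S. 1\<^sup>2) * (\<Sum>C\<in>shadow k S. (?d C)\<^sup>2)"
    by (rule Cauchy_Schwarz_ineq_sum)
  also have "\<dots> \<le> real (card (shadow k S)) * dot (k - 1) ?d ?d"
    unfolding dot_def power2_eq_square using shadow_sub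
    by (simp add: mult_left_mono sum_mono2)
  finally show ?thesis .
qed

lemma card_shadow_quadratic_bound:
  fixes S :: "('a::{field,finite}^'n) set set"
  assumes k: "k \<ge> 1" "k \<le> CARD('n)" and S: "S \<subseteq> subspaces_of_dim k"
  defines "q \<equiv> real CARD('a)" and "s \<equiv> real (card S)"
    and "N \<equiv> real (card (subspaces_of_dim k :: ('a^'n) set set))"
  shows "(qint q k * s)\<^sup>2
       \<le> real (card (shadow k S))
           * (down_eigenvalue q CARD('n) k * (s - s\<^sup>2 / N)
              + qint q k * qint q (CARD('n) - (k - 1)) * s\<^sup>2 / N)"
proof -
  have "(\<Sum>A\<in>subspaces_of_dim k. indicator S A) = s" "dot k (indicator S) (indicator S) = s"
    using S by (simp_all add: dot_def s_def indicator_def sum.If_cases Int_absorb1 Int_absorb2)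
  then show ?thesis
    using sum_down[OF k(1), of "indicator S"] sum_down_indicator_sq_le[OF k(1) S]
      mult_left_mono[OF dot_down_self_le[OF k, of "indicator S"], of "real (card (shadow k S))"]
    by (simp add: q_def N_def)
qed

lemma mu_shadow_ge:
  fixes S :: "('a::{field,finite}^'n) set set"
  assumes k: "k \<ge> 1" "k \<le> CARD('n)" and S: "S \<subseteq> subspaces_of_dim k"
    and z: "z \<ge> 0" and mu_S: "mu k S = 1 / (1 + z)"
  defines "q \<equiv> real CARD('a)"
  shows "mu (k - 1) (shadow k S)
       \<ge> 1 / (1 + down_eigenvalue q CARD('n) k / (qint q k * qint q (CARD('n) - (k - 1))) * z)"
proof -
  define s where "s = real (card S)"
  define N where "N = real (card (subspaces_of_dim k :: ('a^'n) set set))"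
  define M where "M = real (card (subspaces_of_dim (k - 1) :: ('a^'n) set set))"
  define X where "X = real (card (shadow k S))"
  define a where "a = qint q k"
  define b where "b = qint q (CARD('n) - (k - 1))"
  define ev where "ev = down_eigenvalue q CARD('n) k"
  have s_N: "s / N = 1 / (1 + z)" using mu_S by (simp add: mu_def s_def N_def)
  then have "s \<noteq> 0" "N \<noteq> 0" using z by auto
  then have s: "s > 0" and N: "N > 0"
    using finite_subset[OF S] by (simp_all add: s_def N_def card_gt_0_iff)
  have a: "a > 0" and b: "b > 0" and ev: "ev \<ge> 0"
    using card_field_gt_1[where 'a='a] k
    by (simp_all add: q_def a_def b_def ev_def qint_pos down_eigenvalue_nonneg)
  have M: "M = N * a / b"
    using card_subspaces_of_dim_ratio[OF k(1), where 'a='a and 'n='n] b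
    by (simp add: M_def N_def a_def b_def q_def field_simps)
  have "s - s\<^sup>2 / N = s\<^sup>2 * z / N"
    using s_N N z by (simp add: field_simps power2_eq_square)
  then have "(a * s)\<^sup>2 \<le> X * (ev * (s\<^sup>2 * z / N) + a * b * s\<^sup>2 / N)"
    using card_shadow_quadratic_bound[OF k S]
    by (simp add: X_def a_def b_def ev_def q_def N_def s_def)
  also have "\<dots> = s\<^sup>2 / N * (X * (a * b + ev * z))"
    by (simp add: algebra_simps add_divide_distrib)
  finally have "s\<^sup>2 * (a * b * M) \<le> s\<^sup>2 * (X * (a * b + ev * z))"
    using N b unfolding M by (simp add: field_simps power2_eq_square)
  then have "a * b * M \<le> X * (a * b + ev * z)" using s by simp
  moreover have "a * b + ev * z > 0" using a b z ev by (simp add: add_pos_nonneg)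
  moreover have "M > 0" using a b N unfolding M by simp
  ultimately have "1 / (1 + ev / (a * b) * z) \<le> X / M"
    using a b by (simp add: field_simps)
  then show ?thesis by (simp add: mu_def X_def M_def a_def b_def ev_def)
qed

lemma down_eigenvalue_ratio_eq:
  assumes "q \<noteq> 1" "k \<ge> 1" "k \<le> n"
  shows "down_eigenvalue q n k / (qint q k * qint q (n - (k - 1)))
       = q * (q ^ (k - 1) - 1) * (q ^ (n - k) - 1) / ((q ^ k - 1) * (q ^ (n - k + 1) - 1))"
proof -
  have "n - (k - 1) = n - k + 1" using assms by simp
  then show ?thesis
    using assms(1) by (simp add: down_eigenvalue_def qint_def power2_eq_square)
qed

lemma down_eigenvalue_ratio_le:
  assumes q: "q > 1" and k: "k \<ge> 1" "k \<le> n"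
  shows "down_eigenvalue q n k / (qint q k * qint q (n - (k - 1))) \<le> 1 / q"
proof -
  have q_qint_le: "q * qint q m \<le> qint q (Suc m)" for m
    using q by (simp add: qint_Suc)
  have "q * qint q (k - 1) \<le> qint q k" "q * qint q (n - k) \<le> qint q (n - (k - 1))"
    using q_qint_le[of "k - 1"] q_qint_le[of "n - k"] k by (simp_all add: Suc_diff_le)
  then have "(q * qint q (k - 1)) * (q * qint q (n - k)) \<le> qint q k * qint q (n - (k - 1))"
    using q by (intro mult_mono) (simp_all add: qint_nonneg)
  moreover have "qint q k * qint q (n - (k - 1)) > 0" using q k by (simp add: qint_pos)
  ultimately show ?thesis
    using q by (simp add: down_eigenvalue_def field_simps)
qed

theorem theorem1:
  fixes S :: "('a::{field,finite} ^ 'n) set set" and k :: nat and z :: real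
  defines "q \<equiv> real CARD('a)" and "n \<equiv> CARD('n)"
  assumes "1 \<le> k" and "k \<le> n"
    and "S \<subseteq> subspaces_of_dim k"
    and "z \<ge> 0" and "mu k S = 1 / (1 + z)"
  shows "mu (k - 1) (shadow k S)
           \<ge> 1 / (1 + (q * (q ^ (k - 1) - 1) * (q ^ (n - k) - 1))
                     / ((q ^ k - 1) * (q ^ (n - k + 1) - 1)) * z)
         \<and> 1 / (1 + (q * (q ^ (k - 1) - 1) * (q ^ (n - k) - 1))
                 / ((q ^ k - 1) * (q ^ (n - k + 1) - 1)) * z)
           \<ge> 1 / (1 + z / q)"
proof -
  let ?c = "down_eigenvalue q n k / (qint q k * qint q (n - (k - 1)))"
  have q: "q > 1" unfolding q_def by (rule card_field_gt_1)
  have c: "(q * (q ^ (k - 1) - 1) * (q ^ (n - k) - 1)) / ((q ^ k - 1) * (q ^ (n - k + 1) - 1)) = ?c"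
    using down_eigenvalue_ratio_eq[of q k n] q assms(3,4) by simp
  have "mu (k - 1) (shadow k S) \<ge> 1 / (1 + ?c * z)"
    using mu_shadow_ge[OF assms(3-7)[unfolded n_def]] by (simp add: q_def n_def)
  moreover have "?c * z \<le> z / q" "?c * z \<ge> 0" "z / q \<ge> 0"
    using mult_right_mono[OF down_eigenvalue_ratio_le[OF q assms(3,4)] assms(6)]
      down_eigenvalue_nonneg[OF q] qint_nonneg[OF q] assms(6) q by simp_all
  then have "1 / (1 + ?c * z) \<ge> 1 / (1 + z / q)"
    by (intro divide_left_mono) (simp_all add: add_pos_nonneg)
  ultimately show ?thesis unfolding c by simp
qed

end
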